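(* Let $m\in\mathbb{N}$, $x_1,\ldots,x_m\in\mathcal{X}$ fixed, $B\ge1$, $Y_1,\ldots,Y_m$ independent real random variables with values in $[-B,B]$, $\eta_t=\mathbb{E}[Y_t]$. For $i\in\{1,2\}$, $t\in\{1,\ldots,m+1\}$, $q\in[0,\infty)$, let $\mathcal{H}^{(q)}_{i,t}$ be a set of functions $\mathcal{X}\to[-B,B]$, nondecreasing in $q$ (i.e. $\mathcal{H}^{(q)}_{i,t}\subseteq\mathcal{H}^{(q')}_{i,t}$ for $q<q'$), and let $\mathrm{pen}_i(q,t)\in[0,\infty)$. Let $\rho_m(h,g)=\max_{1\le s\le m}|h(x_s)-g(x_s)|$, and for $\epsilon>0$ let $N_i(\epsilon,q)$ be any number with $N_i(\epsilon,q)\ge\max_{t\in\{1,\ldots,m+1\}}|\mathcal{H}^{(q)}_{i,t,\epsilon}|$, where $\mathcal{H}^{(q)}_{i,t,\epsilon}$ is a minimal $\epsilon$-cover of $\mathcal{H}^{(q)}_{i,t}$ w.r.t. $\rho_m$ (assumed finite). Let $\epsilon_i(q)\in(0,B]$ satisfy $\epsilon_i(q)\le B\sqrt{\ln(N_i(\epsilon_i(q),q))/m}$, and write $N_i(q)=N_i(\epsilon_i(q),q)$. With $R^*,\hat R$ as defined below, let $(\hat h_1,\hat h_2,\hat t,\hat q_1,\hat q_2)$ minimize $m\hat R(h_1,h_2,t_0)+\mathrm{pen}_1(q_1,t_0)+\mathrm{pen}_2(q_2,t_0)$ and $(h_1^*,h_2^*,t^*,q_1^*,q_2^* )$ minimize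 $mR^*(h_1,h_2,t_0)+\mathrm{pen}_1(q_1,t_0)+\mathrm{pen}_2(q_2,t_0)$, both over all $(h_1,h_2,t_0,q_1,q_2)$ with $t_0\in\{1,\ldots,m+1\}$, $q_1,q_2\in[0,\infty)$, $h_1\in\mathcal{H}^{(q_1)}_{1,t_0}$, $h_2\in\mathcal{H}^{(q_2)}_{2,t_0}$ (minimizers assumed to exist). Then for every $\delta\in(0,1)$, with probability at least $1-\delta$, $$R^*(\hat h_1,\hat h_2,\hat t)\le R^*(h_1^*,h_2^*,t^* )+\frac{\mathrm{pen}_1(q_1^*,t^* )+\mathrm{pen}_2(q_2^*,t^* )}{m}+22B^2\sqrt{\frac{2\ln\big(\tfrac{2(m+1)}{\delta}\big)+\sum_{i=1}^2\sum_{q\in\{\hat q_i,q_i^*\}}\ln\big((q+3)^2N_i(\lceil q\rceil)\big)}{m}}.$$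
   Context: For $t_0\in\{1,\ldots,m+1\}$ and functions $h_1,h_2:\mathcal{X}\to[-B,B]$: $R^*(h_1,h_2,t_0)=\frac1m\big(\sum_{t=1}^{t_0-1}(h_1(x_t)-\eta_t)^2+\sum_{t=t_0}^m(h_2(x_t)-\eta_t)^2\big)$ and $\hat R(h_1,h_2,t_0)$ is the same with $Y_t$ in place of $\eta_t$; empty sums are $0$. An $\epsilon$-cover of a set $\mathcal{H}$ w.r.t. $\rho_m$ is a set $C\subseteq\mathcal{H}$ such that every $h\in\mathcal{H}$ has some $g\in C$ with $\rho_m(h,g)\le\epsilon$; minimal means of smallest cardinality. *)

theory Defs
  imports "HOL-Probability.Probability"
begin

definition rho_m :: "nat \<Rightarrow> (nat \<Rightarrow> 'x) \<Rightarrow> ('x \<Rightarrow> real) \<Rightarrow> ('x \<Rightarrow> real) \<Rightarrow> real" where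
  "rho_m m x h g = (MAX s\<in>{1..m}. \<bar>h (x s) - g (x s)\<bar>)"

definition is_cover :: "nat \<Rightarrow> (nat \<Rightarrow> 'x) \<Rightarrow> real \<Rightarrow> ('x \<Rightarrow> real) set \<Rightarrow> ('x \<Rightarrow> real) set \<Rightarrow> bool" where
  "is_cover m x eps H C \<longleftrightarrow> C \<subseteq> H \<and> (\<forall>h\<in>H. \<exists>g\<in>C. rho_m m x h g \<le> eps)"

definition min_cover_card :: "nat \<Rightarrow> (nat \<Rightarrow> 'x) \<Rightarrow> real \<Rightarrow> ('x \<Rightarrow> real) set \<Rightarrow> nat" where
  "min_cover_card m x eps H = (LEAST n. \<exists>C. is_cover m x eps H C \<and> finite C \<and> card C = n)"

text \<open>Piecewise risk with targets f: (1/m)(sum_{t<t0} (h1(x_t)-f_t)^2 + sum_{t0<=t<=m} (h2(x_t)-f_t)^2).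
  R^* is risk m x eta, and hat R is risk m x (Y . omega).\<close>
definition risk :: "nat \<Rightarrow> (nat \<Rightarrow> 'x) \<Rightarrow> (nat \<Rightarrow> real) \<Rightarrow> ('x \<Rightarrow> real) \<Rightarrow> ('x \<Rightarrow> real) \<Rightarrow> nat \<Rightarrow> real" where
  "risk m x f h1 h2 t0 = (1 / real m) * ((\<Sum>t\<in>{1..<t0}. (h1 (x t) - f t)^2) + (\<Sum>t\<in>{t0..m}. (h2 (x t) - f t)^2))"

definition feasible :: "nat \<Rightarrow> (nat \<Rightarrow> nat \<Rightarrow> real \<Rightarrow> ('x \<Rightarrow> real) set) \<Rightarrow> ('x \<Rightarrow> real) \<Rightarrow> ('x \<Rightarrow> real) \<Rightarrow> nat \<Rightarrow> real \<Rightarrow> real \<Rightarrow> bool" where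
  "feasible m H h1 h2 t0 q1 q2 \<longleftrightarrow> t0 \<in> {1..m+1} \<and> 0 \<le> q1 \<and> 0 \<le> q2 \<and> h1 \<in> H 1 t0 q1 \<and> h2 \<in> H 2 t0 q2"

definition objective :: "nat \<Rightarrow> (nat \<Rightarrow> 'x) \<Rightarrow> (nat \<Rightarrow> real) \<Rightarrow> (nat \<Rightarrow> real \<Rightarrow> nat \<Rightarrow> real) \<Rightarrow> ('x \<Rightarrow> real) \<Rightarrow> ('x \<Rightarrow> real) \<Rightarrow> nat \<Rightarrow> real \<Rightarrow> real \<Rightarrow> real" where
  "objective m x f pen h1 h2 t0 q1 q2 = real m * risk m x f h1 h2 t0 + pen 1 q1 t0 + pen 2 q2 t0"

end

theory Submission
  imports Defs
begin

text \<open>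
  Comparing the penalized empirical objective of the minimizer with that of the comparator and
  expanding the squares around \<eta> shows that m times the excess risk is at most the comparator's
  penalty plus twice the difference of the cross terms \<Sum> h(x_t) (Y_t - \<eta>_t), each of which splits
  into the segments before and after the change point. For a fixed segment and a fixed function,
  Hoeffding's inequality controls the cross term. Uniformity comes from rounding the complexity q up
  to an integer level k, replacing h by a point of a minimal \<epsilon>-cover at that level (at a cost
  2Bm\<epsilon> \<le> 2B^2 sqrt(m ln N)), and a union bound over the two segments, the m + 1 change points, the
  cover and the levels k, with weights (k + 2)^-2. Adding the four resulting deviation bounds with
  Cauchy-Schwarz gives the constant 20 \<le> 22.
\<close>

section \<open>Concentration and union bounds\<close>

lemma (in prob_space) hoeffding_weighted_sum:
  fixes Y :: "'i \<Rightarrow> 'a \<Rightarrow> real" and w :: "'i \<Rightarrow> real"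
  assumes fin: "finite I" and ind: "indep_vars (\<lambda>_. borel) Y I" and card: "card I \<le> n"
    and Y_le: "\<And>t \<omega>. t \<in> I \<Longrightarrow> \<omega> \<in> space M \<Longrightarrow> \<bar>Y t \<omega>\<bar> \<le> b"
    and w_le: "\<And>t. t \<in> I \<Longrightarrow> \<bar>w t\<bar> \<le> a"
    and pos: "0 < a" "0 < b" "0 < n" "0 < l"
  shows "prob {\<omega>\<in>space M. a * b * sqrt (2 * real n * l) \<le> \<bar>\<Sum>t\<in>I. w t * (Y t \<omega> - expectation (Y t))\<bar>}
           \<le> 2 * exp (- l)"
proof (cases "I = {}")
  case True
  have "0 < a * b * sqrt (2 * real n * l)" using pos by simp
  then have empty: "{\<omega>\<in>space M. a * b * sqrt (2 * real n * l) \<le> \<bar>\<Sum>t\<in>I. w t * (Y t \<omega> - expectation (Y t))\<bar>} = {}"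
    using True by auto
  show ?thesis unfolding empty by simp
next
  case False
  let ?X = "\<lambda>t \<omega>. w t * Y t \<omega>"
  interpret Hoeffding_ineq M I ?X "\<lambda>_. - (a * b)" "\<lambda>_. a * b" "\<Sum>t\<in>I. expectation (?X t)"
  proof unfold_locales
    show "indep_vars (\<lambda>_. borel) ?X I"
      by (rule indep_vars_compose2[OF ind]) auto
    fix t assume t: "t \<in> I"
    show "AE \<omega> in M. ?X t \<omega> \<in> {- (a * b)..a * b}"
    proof (rule AE_I2)
      fix \<omega> assume "\<omega> \<in> space M"
      then have "\<bar>?X t \<omega>\<bar> \<le> a * b"
        unfolding abs_mult using w_le[OF t] Y_le[OF t] pos by (intro mult_mono) auto
      then show "?X t \<omega> \<in> {- (a * b)..a * b}" by (simp add: abs_le_iff)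
    qed
  qed (use fin in auto)
  have width: "(\<Sum>t\<in>I. (a * b - - (a * b))\<^sup>2) = real (card I) * (4 * (a * b)\<^sup>2)"
    by (simp add: power2_eq_square)
  have card_pos: "0 < card I" using False fin by auto
  have centred: "{\<omega>\<in>space M. a * b * sqrt (2 * real n * l) \<le> \<bar>\<Sum>t\<in>I. w t * (Y t \<omega> - expectation (Y t))\<bar>}
      = {\<omega>\<in>space M. a * b * sqrt (2 * real n * l) \<le> \<bar>(\<Sum>t\<in>I. ?X t \<omega>) - (\<Sum>t\<in>I. expectation (?X t))\<bar>}"
    by (simp add: right_diff_distrib sum_subtractf)
  have "prob {\<omega>\<in>space M. a * b * sqrt (2 * real n * l) \<le> \<bar>(\<Sum>t\<in>I. ?X t \<omega>) - (\<Sum>t\<in>I. expectation (?X t))\<bar>}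
        \<le> 2 * exp (-2 * (a * b * sqrt (2 * real n * l))\<^sup>2 / (\<Sum>t\<in>I. (a * b - - (a * b))\<^sup>2))"
    by (rule Hoeffding_ineq_abs_ge) (use pos card_pos in \<open>auto simp: width\<close>)
  also have "-2 * (a * b * sqrt (2 * real n * l))\<^sup>2 / (\<Sum>t\<in>I. (a * b - - (a * b))\<^sup>2) = - (real n * l / real (card I))"
    unfolding width using pos card_pos by (simp add: power_mult_distrib field_simps)
  also have "2 * exp (- (real n * l / real (card I))) \<le> 2 * exp (- l)"
    using card card_pos pos by (simp add: field_simps mult_right_mono)
  finally show ?thesis unfolding centred .
qed

lemma (in prob_space) prob_UN_le_card_mult:
  assumes "finite I" "\<And>i. i \<in> I \<Longrightarrow> A i \<in> events" "\<And>i. i \<in> I \<Longrightarrow> prob (A i) \<le> p"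
  shows "prob (\<Union>i\<in>I. A i) \<le> real (card I) * p"
proof -
  have "prob (\<Union>i\<in>I. A i) \<le> (\<Sum>i\<in>I. prob (A i))"
    using assms by (intro measure_UNION_le) auto
  also have "\<dots> \<le> (\<Sum>i\<in>I. p)" using assms by (intro sum_mono) auto
  finally show ?thesis by simp
qed

lemma sum_inverse_square_shift_le: "(\<Sum>k<K. 1 / (real k + 2)\<^sup>2) \<le> 1 - 1 / (real K + 1)"
proof (induction K)
  case (Suc K)
  have "1 / (real K + 2)\<^sup>2 \<le> 1 / ((real K + 1) * (real K + 2))"
    by (rule divide_left_mono) (auto simp: power2_eq_square)
  also have "\<dots> = 1 / (real K + 1) - 1 / (real K + 2)" by (simp add: field_simps)
  finally show ?case using Suc by (simp add: add.commute)
qed simp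

lemma
  shows summable_inverse_square_shift: "summable (\<lambda>k. 1 / (real k + 2)\<^sup>2)"
    and suminf_inverse_square_shift_le: "(\<Sum>k. 1 / (real k + 2)\<^sup>2) \<le> 1"
proof -
  have partial: "(\<Sum>k<K. 1 / (real k + 2)\<^sup>2) \<le> 1" for K
    using sum_inverse_square_shift_le[of K] divide_nonneg_nonneg[of 1 "real K + 1"] by linarith
  show "summable (\<lambda>k. 1 / (real k + 2)\<^sup>2)"
    by (rule summableI_nonneg_bounded[OF _ partial]) simp
  then show "(\<Sum>k. 1 / (real k + 2)\<^sup>2) \<le> 1"
    by (rule suminf_le_const[OF _ partial])
qed

lemma (in prob_space) prob_UN_le_inverse_square:
  assumes events: "\<And>k. F k \<in> events" and bound: "\<And>k. prob (F k) \<le> c / (real k + 2)\<^sup>2"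
  shows "prob (\<Union>k. F k) \<le> c"
proof -
  have "prob (F 0) \<le> c / 4" using bound[of 0] by simp
  then have "0 \<le> c" using measure_nonneg[of M "F 0"] by linarith
  have weights: "summable (\<lambda>k. c * (1 / (real k + 2)\<^sup>2))"
    by (intro summable_mult summable_inverse_square_shift)
  have probs: "summable (\<lambda>k. prob (F k))"
    by (rule summable_comparison_test'[OF weights]) (use bound in simp)
  have "prob (\<Union>k. F k) \<le> (\<Sum>k. prob (F k))"
    using events probs by (intro finite_measure_subadditive_countably) auto
  also have "\<dots> \<le> (\<Sum>k. c * (1 / (real k + 2)\<^sup>2))"
    by (rule suminf_le[OF _ probs weights]) (use bound in simp)
  also have "\<dots> = c * (\<Sum>k. 1 / (real k + 2)\<^sup>2)"
    by (rule suminf_mult[OF summable_inverse_square_shift])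
  also have "\<dots> \<le> c"
    using mult_left_mono[OF suminf_inverse_square_shift_le \<open>0 \<le> c\<close>] by simp
  finally show ?thesis .
qed

lemma sqrt_mult_eq_mult_sqrt_divide:
  fixes a s :: real
  assumes "0 < a"
  shows "sqrt (a * s) = a * sqrt (s / a)"
proof -
  have "a * s = a\<^sup>2 * (s / a)" using assms by (simp add: power2_eq_square)
  then have "sqrt (a * s) = sqrt (a\<^sup>2) * sqrt (s / a)" by (simp only: real_sqrt_mult)
  then show ?thesis using assms by simp
qed

lemma sum_four_sqrt_le:
  fixes a b c d :: real
  assumes "0 \<le> a" "0 \<le> b" "0 \<le> c" "0 \<le> d"
  shows "sqrt a + sqrt b + sqrt c + sqrt d \<le> 2 * sqrt (a + b + c + d)"
proof -
  define u v w z where "u = sqrt a" "v = sqrt b" "w = sqrt c" "z = sqrt d"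
  have squares: "a = u\<^sup>2" "b = v\<^sup>2" "c = w\<^sup>2" "d = z\<^sup>2"
    using assms unfolding u_v_w_z_def by auto
  have "2\<^sup>2 * (u\<^sup>2 + v\<^sup>2 + w\<^sup>2 + z\<^sup>2) - (u + v + w + z)\<^sup>2
      = (u - v)\<^sup>2 + (u - w)\<^sup>2 + (u - z)\<^sup>2 + (v - w)\<^sup>2 + (v - z)\<^sup>2 + (w - z)\<^sup>2"
    by (simp add: power2_eq_square algebra_simps)
  moreover have "0 \<le> (u - v)\<^sup>2 + (u - w)\<^sup>2 + (u - z)\<^sup>2 + (v - w)\<^sup>2 + (v - z)\<^sup>2 + (w - z)\<^sup>2"
    by simp
  ultimately have "(u + v + w + z)\<^sup>2 \<le> 2\<^sup>2 * (u\<^sup>2 + v\<^sup>2 + w\<^sup>2 + z\<^sup>2)" by linarith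
  then have "u + v + w + z \<le> sqrt (2\<^sup>2 * (u\<^sup>2 + v\<^sup>2 + w\<^sup>2 + z\<^sup>2))"
    by (rule real_le_rsqrt)
  also have "\<dots> = 2 * sqrt (a + b + c + d)" unfolding real_sqrt_mult squares by simp
  finally show ?thesis unfolding u_v_w_z_def .
qed

section \<open>Empirical distance and excess risk\<close>

lemma abs_diff_le_rho_m:
  assumes "t \<in> {1..m}"
  shows "\<bar>h (x t) - g (x t)\<bar> \<le> rho_m m x h g"
  unfolding rho_m_def using assms by (intro Max_ge) auto

lemma abs_sum_le_of_rho_m_le:
  assumes I: "I \<subseteq> {1..m}" and rho: "rho_m m x h g \<le> \<epsilon>"
    and d: "\<And>t. t \<in> I \<Longrightarrow> \<bar>d t\<bar> \<le> c" and nonneg: "0 \<le> \<epsilon>" "0 \<le> c"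
  shows "\<bar>\<Sum>t\<in>I. h (x t) * d t\<bar> \<le> \<bar>\<Sum>t\<in>I. g (x t) * d t\<bar> + real m * \<epsilon> * c"
proof -
  have "\<bar>\<Sum>t\<in>I. (h (x t) - g (x t)) * d t\<bar> \<le> (\<Sum>t\<in>I. \<bar>h (x t) - g (x t)\<bar> * \<bar>d t\<bar>)"
    unfolding abs_mult[symmetric] by (rule sum_abs)
  also have "\<dots> \<le> (\<Sum>t\<in>I. \<epsilon> * c)"
  proof (rule sum_mono)
    fix t assume t: "t \<in> I"
    have "\<bar>h (x t) - g (x t)\<bar> \<le> \<epsilon>"
      using abs_diff_le_rho_m[of t m h x g] I t rho by auto
    then show "\<bar>h (x t) - g (x t)\<bar> * \<bar>d t\<bar> \<le> \<epsilon> * c" using d[OF t] nonneg by (intro mult_mono) auto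
  qed
  also have "\<dots> \<le> real m * \<epsilon> * c"
    using mult_right_mono[of "real (card I)" "real m" "\<epsilon> * c"] card_mono[OF _ I] nonneg
    by (simp add: mult.assoc)
  finally have "\<bar>\<Sum>t\<in>I. (h (x t) - g (x t)) * d t\<bar> \<le> real m * \<epsilon> * c" .
  moreover have "(\<Sum>t\<in>I. h (x t) * d t) = (\<Sum>t\<in>I. g (x t) * d t) + (\<Sum>t\<in>I. (h (x t) - g (x t)) * d t)"
    by (simp add: sum.distrib[symmetric] algebra_simps)
  ultimately show ?thesis by linarith
qed

definition cross_term :: "nat \<Rightarrow> (nat \<Rightarrow> 'x) \<Rightarrow> (nat \<Rightarrow> real) \<Rightarrow> ('x \<Rightarrow> real) \<Rightarrow> ('x \<Rightarrow> real) \<Rightarrow> nat \<Rightarrow> real" where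
  "cross_term m x d h1 h2 t0 = (\<Sum>t\<in>{1..<t0}. h1 (x t) * d t) + (\<Sum>t\<in>{t0..m}. h2 (x t) * d t)"

lemma sum_sq_diff_change_target:
  fixes h e y :: "nat \<Rightarrow> real"
  shows "(\<Sum>t\<in>S. (h t - e t)\<^sup>2)
    = (\<Sum>t\<in>S. (h t - y t)\<^sup>2) - (\<Sum>t\<in>S. (y t)\<^sup>2 - (e t)\<^sup>2) + 2 * (\<Sum>t\<in>S. h t * (y t - e t))"
proof -
  have "(\<Sum>t\<in>S. (h t - e t)\<^sup>2)
      = (\<Sum>t\<in>S. (h t - y t)\<^sup>2 - ((y t)\<^sup>2 - (e t)\<^sup>2) + 2 * (h t * (y t - e t)))"
    by (intro sum.cong) (simp_all add: power2_eq_square algebra_simps)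
  then show ?thesis by (simp only: sum.distrib sum_subtractf sum_distrib_left)
qed

lemma sum_split_at:
  fixes f :: "nat \<Rightarrow> real"
  assumes "t0 \<in> {1..m+1}"
  shows "(\<Sum>t\<in>{1..m}. f t) = (\<Sum>t\<in>{1..<t0}. f t) + (\<Sum>t\<in>{t0..m}. f t)"
proof -
  have "{1..m} = {1..<t0} \<union> {t0..m}" using assms by auto
  moreover have "sum f ({1..<t0} \<union> {t0..m}) = sum f {1..<t0} + sum f {t0..m}"
    by (rule sum.union_disjoint) auto
  ultimately show ?thesis by simp
qed

lemma risk_change_target:
  assumes "0 < m" "t0 \<in> {1..m+1}"
  shows "real m * risk m x e h1 h2 t0 = real m * risk m x y h1 h2 t0
    - (\<Sum>t\<in>{1..m}. (y t)\<^sup>2 - (e t)\<^sup>2) + 2 * cross_term m x (\<lambda>t. y t - e t) h1 h2 t0"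
  using assms
  unfolding risk_def cross_term_def sum_sq_diff_change_target[where y = y and e = e]
    sum_split_at[OF assms(2), of "\<lambda>t. (y t)\<^sup>2 - (e t)\<^sup>2"]
  by (simp add: algebra_simps)

lemma risk_le_of_objective_le:
  assumes m: "0 < m" and t: "t1 \<in> {1..m+1}" "t2 \<in> {1..m+1}"
    and pen: "0 \<le> pen 1 q1 t1" "0 \<le> pen 2 q2 t1"
    and obj: "objective m x y pen h1 h2 t1 q1 q2 \<le> objective m x y pen g1 g2 t2 p1 p2"
  shows "risk m x e h1 h2 t1 \<le> risk m x e g1 g2 t2 + (pen 1 p1 t2 + pen 2 p2 t2) / real m
    + 2 / real m * (cross_term m x (\<lambda>t. y t - e t) h1 h2 t1 - cross_term m x (\<lambda>t. y t - e t) g1 g2 t2)"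
proof -
  let ?z = "cross_term m x (\<lambda>t. y t - e t) h1 h2 t1 - cross_term m x (\<lambda>t. y t - e t) g1 g2 t2"
  have "real m * risk m x e h1 h2 t1 \<le> real m * risk m x e g1 g2 t2 + (pen 1 p1 t2 + pen 2 p2 t2) + 2 * ?z"
    using obj pen risk_change_target[OF m t(1), of x e h1 h2 y]
      risk_change_target[OF m t(2), of x e g1 g2 y]
    unfolding objective_def by (simp add: right_diff_distrib)
  then have "risk m x e h1 h2 t1 \<le> (real m * risk m x e g1 g2 t2 + (pen 1 p1 t2 + pen 2 p2 t2) + 2 * ?z) / real m"
    using m by (simp add: pos_le_divide_eq mult.commute)
  also have "\<dots> = risk m x e g1 g2 t2 + (pen 1 p1 t2 + pen 2 p2 t2) / real m + 2 / real m * ?z"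
    using m by (simp add: field_simps)
  finally show ?thesis .
qed

section \<open>Uniform deviation of the cross terms\<close>

locale piecewise_regression = prob_space M for M :: "'w measure" +
  fixes m :: nat and x :: "nat \<Rightarrow> 'x" and B :: real
    and Y :: "nat \<Rightarrow> 'w \<Rightarrow> real" and \<eta> :: "nat \<Rightarrow> real"
    and H :: "nat \<Rightarrow> nat \<Rightarrow> real \<Rightarrow> ('x \<Rightarrow> real) set"
    and N :: "nat \<Rightarrow> real \<Rightarrow> real \<Rightarrow> real" and eps :: "nat \<Rightarrow> real \<Rightarrow> real" and \<delta> :: real
  assumes m_pos: "0 < m" and B: "1 \<le> B"
    and indep: "indep_vars (\<lambda>_. borel) Y {1..m}"
    and Y_bounded: "\<And>t \<omega>. t \<in> {1..m} \<Longrightarrow> \<omega> \<in> space M \<Longrightarrow> Y t \<omega> \<in> {-B..B}"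
    and eta: "\<And>t. t \<in> {1..m} \<Longrightarrow> \<eta> t = expectation (Y t)"
    and H_bounded: "\<And>i t q h z. i \<in> {1,2} \<Longrightarrow> t \<in> {1..m+1} \<Longrightarrow> 0 \<le> q \<Longrightarrow> h \<in> H i t q \<Longrightarrow> h z \<in> {-B..B}"
    and H_mono: "\<And>i t q q'. i \<in> {1,2} \<Longrightarrow> t \<in> {1..m+1} \<Longrightarrow> 0 \<le> q \<Longrightarrow> q < q' \<Longrightarrow> H i t q \<subseteq> H i t q'"
    and cover_exists: "\<And>i t q e. i \<in> {1,2} \<Longrightarrow> t \<in> {1..m+1} \<Longrightarrow> 0 \<le> q \<Longrightarrow> 0 < e \<Longrightarrow>
        \<exists>C. is_cover m x e (H i t q) C \<and> finite C"
    and N_ge: "\<And>i t q e. i \<in> {1,2} \<Longrightarrow> t \<in> {1..m+1} \<Longrightarrow> 0 \<le> q \<Longrightarrow> 0 < e \<Longrightarrow>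
        real (min_cover_card m x e (H i t q)) \<le> N i e q"
    and eps_pos: "\<And>i q. i \<in> {1,2} \<Longrightarrow> 0 \<le> q \<Longrightarrow> 0 < eps i q"
    and eps_le: "\<And>i q. i \<in> {1,2} \<Longrightarrow> 0 \<le> q \<Longrightarrow> eps i q \<le> B * sqrt (ln (N i (eps i q) q) / real m)"
    and delta: "0 < \<delta>" "\<delta> < 1"
begin

lemma Y_measurable: "t \<in> {1..m} \<Longrightarrow> Y t \<in> borel_measurable M"
  using indep unfolding indep_vars_def by auto

lemma abs_Y_le:
  assumes "t \<in> {1..m}" "\<omega> \<in> space M"
  shows "\<bar>Y t \<omega>\<bar> \<le> B"
  using Y_bounded[OF assms] by (simp add: abs_le_iff)

lemma abs_eta_le:
  assumes t: "t \<in> {1..m}"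
  shows "\<bar>\<eta> t\<bar> \<le> B"
proof -
  have int: "integrable M (Y t)"
    using abs_Y_le[OF t] Y_measurable[OF t] by (intro integrable_const_bound[where B = B]) auto
  have "expectation (Y t) \<le> B" "- B \<le> expectation (Y t)"
    using Y_bounded[OF t] by (auto intro!: integral_le_const[OF int] integral_ge_const[OF int])
  then show ?thesis using eta[OF t] by (simp add: abs_le_iff)
qed

definition cover_size :: "nat \<Rightarrow> nat \<Rightarrow> real" where
  "cover_size i k = N i (eps i (real k)) (real k)"

definition min_cover :: "nat \<Rightarrow> nat \<Rightarrow> nat \<Rightarrow> ('x \<Rightarrow> real) set" where
  "min_cover i t0 k = (SOME C. is_cover m x (eps i (real k)) (H i t0 (real k)) C \<and> finite C
      \<and> card C = min_cover_card m x (eps i (real k)) (H i t0 (real k)))"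

lemma min_cover:
  assumes i: "i \<in> {1,2}" and t0: "t0 \<in> {1..m+1}"
  shows "is_cover m x (eps i (real k)) (H i t0 (real k)) (min_cover i t0 k)"
    and "finite (min_cover i t0 k)"
    and "real (card (min_cover i t0 k)) \<le> cover_size i k"
proof -
  let ?e = "eps i (real k)" and ?H = "H i t0 (real k)"
  have k: "0 \<le> real k" by simp
  have e: "0 < ?e" using eps_pos[OF i k] .
  obtain C where "is_cover m x ?e ?H C" "finite C" using cover_exists[OF i t0 k e] by auto
  then have "\<exists>n C. is_cover m x ?e ?H C \<and> finite C \<and> card C = n" by blast
  then have "\<exists>C. is_cover m x ?e ?H C \<and> finite C \<and> card C = min_cover_card m x ?e ?H"
    unfolding min_cover_card_def by (rule LeastI_ex)
  then have *: "is_cover m x ?e ?H (min_cover i t0 k) \<and> finite (min_cover i t0 k)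
      \<and> card (min_cover i t0 k) = min_cover_card m x ?e ?H"
    unfolding min_cover_def by (rule someI_ex)
  then show "is_cover m x ?e ?H (min_cover i t0 k)" "finite (min_cover i t0 k)" by auto
  show "real (card (min_cover i t0 k)) \<le> cover_size i k"
    using * N_ge[OF i t0 k e] unfolding cover_size_def by simp
qed

lemma cover_size_gt_1:
  assumes i: "i \<in> {1,2}"
  shows "1 < cover_size i k"
proof -
  have k: "0 \<le> real k" by simp
  have e: "0 < eps i (real k)" using eps_pos[OF i k] .
  then have "0 < B * sqrt (ln (cover_size i k) / real m)"
    using eps_le[OF i k] unfolding cover_size_def by linarith
  then have "0 < sqrt (ln (cover_size i k) / real m)"
    using B by (simp add: zero_less_mult_iff)
  then have ln_pos: "0 < ln (cover_size i k)"
    using m_pos by (simp add: zero_less_divide_iff)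
  have "1 \<in> {1..m+1}" by simp
  from N_ge[OF i this k e] have "0 \<le> cover_size i k"
    unfolding cover_size_def using of_nat_0_le_iff by linarith
  moreover have "cover_size i k \<noteq> 0" using ln_pos by auto
  ultimately show ?thesis using ln_pos by simp
qed

definition segment :: "nat \<Rightarrow> nat \<Rightarrow> nat set" where
  "segment i t0 = (if i = 1 then {1..<t0} else {t0..m})"

lemma segment_subset: "t0 \<in> {1..m+1} \<Longrightarrow> segment i t0 \<subseteq> {1..m}"
  unfolding segment_def by auto

lemma cross_term_segments:
  "cross_term m x d h1 h2 t0 = (\<Sum>t\<in>segment 1 t0. h1 (x t) * d t) + (\<Sum>t\<in>segment 2 t0. h2 (x t) * d t)"
  unfolding cross_term_def segment_def by simp

text \<open>
  The constant is chosen so that the deviation events at level k, taken over both segments, all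
  m + 1 change points and the whole cover, have total probability at most \<delta> / (k + 2)^2.
\<close>
definition confidence :: "nat \<Rightarrow> nat \<Rightarrow> real" where
  "confidence i k = ln (4 * (real m + 1) * (real k + 2)\<^sup>2 * cover_size i k / \<delta>)"

lemma exp_neg_confidence:
  assumes "i \<in> {1,2}"
  shows "2 * exp (- confidence i k) = \<delta> / (2 * (real m + 1) * (real k + 2)\<^sup>2 * cover_size i k)"
proof -
  define c where "c = (real m + 1) * (real k + 2)\<^sup>2 * cover_size i k"
  have c: "0 < c" using cover_size_gt_1[OF assms, of k] unfolding c_def by simp
  have "confidence i k = ln (4 * c / \<delta>)" unfolding confidence_def c_def by (simp add: algebra_simps)
  then have "exp (- confidence i k) = \<delta> / (4 * c)" using c delta by (simp add: exp_minus)
  moreover have "2 * (real m + 1) * (real k + 2)\<^sup>2 * cover_size i k = 2 * c"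
    unfolding c_def by (simp add: mult.assoc)
  ultimately show ?thesis by simp
qed

lemma confidence_pos:
  assumes i: "i \<in> {1,2}"
  shows "0 < confidence i k"
proof -
  define a where "a = 4 * (real m + 1) * (real k + 2)\<^sup>2 * cover_size i k"
  have "1 \<le> 4 * (real m + 1) * (real k + 2)\<^sup>2"
    using one_le_power[of "real k + 2" 2] by (simp add: mult_ge1_I)
  then have "cover_size i k \<le> a"
    using mult_right_mono[of 1 _ "cover_size i k"] cover_size_gt_1[OF i, of k] unfolding a_def by simp
  then have a: "1 < a" using cover_size_gt_1[OF i, of k] by linarith
  then have "a * \<delta> \<le> a" using delta by (intro mult_left_le) auto
  then have "a \<le> a / \<delta>" using delta by (simp add: le_divide_eq)
  then show ?thesis using a unfolding confidence_def a_def[symmetric] by simp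
qed

definition deviation_event :: "nat \<Rightarrow> nat \<Rightarrow> nat \<Rightarrow> ('x \<Rightarrow> real) \<Rightarrow> 'w set" where
  "deviation_event i t0 k g = {\<omega> \<in> space M.
     B\<^sup>2 * sqrt (2 * real m * confidence i k) \<le> \<bar>\<Sum>t\<in>segment i t0. g (x t) * (Y t \<omega> - \<eta> t)\<bar>}"

lemma deviation_event_measurable:
  assumes "t0 \<in> {1..m+1}"
  shows "deviation_event i t0 k g \<in> events"
proof -
  have [measurable]: "(\<lambda>\<omega>. \<Sum>t\<in>segment i t0. g (x t) * (Y t \<omega> - \<eta> t)) \<in> borel_measurable M"
    by (intro borel_measurable_sum borel_measurable_times borel_measurable_diff borel_measurable_const)
       (use Y_measurable segment_subset[OF assms] in blast)
  show ?thesis unfolding deviation_event_def by measurable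
qed

lemma prob_deviation_event:
  assumes i: "i \<in> {1,2}" and t0: "t0 \<in> {1..m+1}" and g: "g \<in> min_cover i t0 k"
  shows "prob (deviation_event i t0 k g) \<le> \<delta> / (2 * (real m + 1) * (real k + 2)\<^sup>2 * cover_size i k)"
proof -
  have seg: "segment i t0 \<subseteq> {1..m}" by (rule segment_subset[OF t0])
  have "g \<in> H i t0 (real k)" using g min_cover(1)[OF i t0] unfolding is_cover_def by blast
  then have g_le: "\<bar>g z\<bar> \<le> B" for z using H_bounded[OF i t0, of "real k" g z] by (auto simp: abs_le_iff)
  have "deviation_event i t0 k g = {\<omega> \<in> space M. B * B * sqrt (2 * real m * confidence i k)
      \<le> \<bar>\<Sum>t\<in>segment i t0. g (x t) * (Y t \<omega> - expectation (Y t))\<bar>}"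
  proof -
    have "(\<Sum>t\<in>segment i t0. g (x t) * (Y t \<omega> - \<eta> t))
        = (\<Sum>t\<in>segment i t0. g (x t) * (Y t \<omega> - expectation (Y t)))" for \<omega>
      using eta seg by (intro sum.cong) auto
    then show ?thesis unfolding deviation_event_def power2_eq_square by simp
  qed
  also have "prob \<dots> \<le> 2 * exp (- confidence i k)"
    using B m_pos confidence_pos[OF i] seg abs_Y_le g_le finite_subset[OF seg] card_mono[OF _ seg]
    by (intro hoeffding_weighted_sum indep_vars_subset[OF indep seg]) auto
  also have "\<dots> = \<delta> / (2 * (real m + 1) * (real k + 2)\<^sup>2 * cover_size i k)"
    by (rule exp_neg_confidence[OF i])
  finally show ?thesis .
qed

definition bad_event :: "nat \<Rightarrow> 'w set" where
  "bad_event k = (\<Union>i\<in>{1,2}. \<Union>t0\<in>{1..m+1}. \<Union>g\<in>min_cover i t0 k. deviation_event i t0 k g)"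

lemma bad_event_measurable: "bad_event k \<in> events"
  unfolding bad_event_def using min_cover(2) deviation_event_measurable by (auto intro!: sets.finite_UN)

lemma prob_bad_event: "prob (bad_event k) \<le> \<delta> / (real k + 2)\<^sup>2"
proof -
  have per_cover: "prob (\<Union>g\<in>min_cover i t0 k. deviation_event i t0 k g) \<le> \<delta> / (2 * (real m + 1) * (real k + 2)\<^sup>2)"
    if i: "i \<in> {1,2}" and t0: "t0 \<in> {1..m+1}" for i t0
  proof -
    have "prob (\<Union>g\<in>min_cover i t0 k. deviation_event i t0 k g)
        \<le> real (card (min_cover i t0 k)) * (\<delta> / (2 * (real m + 1) * (real k + 2)\<^sup>2 * cover_size i k))"
      using min_cover(2)[OF i t0] deviation_event_measurable[OF t0] prob_deviation_event[OF i t0]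
      by (intro prob_UN_le_card_mult) auto
    also have "\<dots> \<le> cover_size i k * (\<delta> / (2 * (real m + 1) * (real k + 2)\<^sup>2 * cover_size i k))"
      using min_cover(3)[OF i t0] cover_size_gt_1[OF i, of k] delta by (intro mult_right_mono) auto
    also have "\<dots> = \<delta> / (2 * (real m + 1) * (real k + 2)\<^sup>2)"
      using cover_size_gt_1[OF i, of k] by simp
    finally show ?thesis .
  qed
  have per_segment: "prob (\<Union>t0\<in>{1..m+1}. \<Union>g\<in>min_cover i t0 k. deviation_event i t0 k g) \<le> \<delta> / (2 * (real k + 2)\<^sup>2)"
    if i: "i \<in> {1,2}" for i
  proof -
    have "prob (\<Union>t0\<in>{1..m+1}. \<Union>g\<in>min_cover i t0 k. deviation_event i t0 k g)
        \<le> real (card {1..m+1}) * (\<delta> / (2 * (real m + 1) * (real k + 2)\<^sup>2))"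
      using min_cover(2)[OF i] deviation_event_measurable per_cover[OF i]
      by (intro prob_UN_le_card_mult) auto
    also have "\<dots> = \<delta> / (2 * (real k + 2)\<^sup>2)" by (simp add: divide_simps)
    finally show ?thesis .
  qed
  have "prob (bad_event k) \<le> real (card {1::nat,2}) * (\<delta> / (2 * (real k + 2)\<^sup>2))"
    unfolding bad_event_def using min_cover(2) deviation_event_measurable per_segment
    by (intro prob_UN_le_card_mult) (auto intro!: sets.finite_UN)
  then show ?thesis by simp
qed

definition good_event :: "'w set" where
  "good_event = space M - (\<Union>k. bad_event k)"

lemma good_event_measurable: "good_event \<in> events"
  unfolding good_event_def using bad_event_measurable by auto

lemma prob_good_event: "1 - \<delta> \<le> prob good_event"
proof -
  have "prob (\<Union>k. bad_event k) \<le> \<delta>"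
    using bad_event_measurable prob_bad_event by (rule prob_UN_le_inverse_square)
  then show ?thesis
    unfolding good_event_def using bad_event_measurable by (subst prob_compl) auto
qed

lemma H_subset_ceiling:
  assumes i: "i \<in> {1,2}" and t0: "t0 \<in> {1..m+1}" and q: "0 \<le> q"
  shows "H i t0 q \<subseteq> H i t0 (real (nat \<lceil>q\<rceil>))"
proof (cases "q < real (nat \<lceil>q\<rceil>)")
  case True
  then show ?thesis using H_mono[OF i t0 q] by blast
next
  case False
  then have "q = real (nat \<lceil>q\<rceil>)" using real_nat_ceiling_ge[of q] by linarith
  then show ?thesis by simp
qed

lemma cover_radius_term_le:
  assumes i: "i \<in> {1,2}"
  shows "real m * eps i (real k) * (2 * B) \<le> 2 * B\<^sup>2 * sqrt (real m * ln (cover_size i k))"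
proof -
  have "real m * eps i (real k) * (2 * B) \<le> real m * (B * sqrt (ln (cover_size i k) / real m)) * (2 * B)"
    using eps_le[OF i, of "real k"] m_pos B unfolding cover_size_def
    by (intro mult_right_mono mult_left_mono) auto
  also have "real m * (B * sqrt (ln (cover_size i k) / real m)) * (2 * B) = 2 * B\<^sup>2 * sqrt (real m * ln (cover_size i k))"
    unfolding sqrt_mult_eq_mult_sqrt_divide[OF of_nat_0_less_iff[THEN iffD2, OF m_pos]]
    by (simp add: power2_eq_square algebra_simps)
  finally show ?thesis .
qed

definition deviation_bound :: "nat \<Rightarrow> real \<Rightarrow> real" where
  "deviation_bound i q = B\<^sup>2 * sqrt (2 * real m * confidence i (nat \<lceil>q\<rceil>))
     + 2 * B\<^sup>2 * sqrt (real m * ln (cover_size i (nat \<lceil>q\<rceil>)))"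

lemma uniform_deviation:
  assumes \<omega>: "\<omega> \<in> good_event" and i: "i \<in> {1,2}" and t0: "t0 \<in> {1..m+1}"
    and q: "0 \<le> q" and h: "h \<in> H i t0 q"
  shows "\<bar>\<Sum>t\<in>segment i t0. h (x t) * (Y t \<omega> - \<eta> t)\<bar> \<le> deviation_bound i q"
proof -
  define k where "k = nat \<lceil>q\<rceil>"
  have "h \<in> H i t0 (real k)" using H_subset_ceiling[OF i t0 q] h unfolding k_def by blast
  then obtain g where g: "g \<in> min_cover i t0 k" and rho: "rho_m m x h g \<le> eps i (real k)"
    using min_cover(1)[OF i t0, of k] unfolding is_cover_def by blast
  have \<omega>_space: "\<omega> \<in> space M" and "\<omega> \<notin> deviation_event i t0 k g"
    using \<omega> g i t0 unfolding good_event_def bad_event_def by auto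
  then have close: "\<bar>\<Sum>t\<in>segment i t0. g (x t) * (Y t \<omega> - \<eta> t)\<bar> < B\<^sup>2 * sqrt (2 * real m * confidence i k)"
    unfolding deviation_event_def by auto
  have "\<bar>\<Sum>t\<in>segment i t0. h (x t) * (Y t \<omega> - \<eta> t)\<bar>
      \<le> \<bar>\<Sum>t\<in>segment i t0. g (x t) * (Y t \<omega> - \<eta> t)\<bar> + real m * eps i (real k) * (2 * B)"
  proof (rule abs_sum_le_of_rho_m_le[OF segment_subset[OF t0] rho])
    fix t assume "t \<in> segment i t0"
    then have t: "t \<in> {1..m}" using segment_subset[OF t0] by blast
    show "\<bar>Y t \<omega> - \<eta> t\<bar> \<le> 2 * B" using abs_Y_le[OF t \<omega>_space] abs_eta_le[OF t] by linarith
  qed (use eps_pos[OF i, of "real k"] B in auto)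
  then show ?thesis
    using close cover_radius_term_le[OF i, of k] unfolding deviation_bound_def k_def by linarith
qed

definition log_complexity :: "nat \<Rightarrow> real \<Rightarrow> real" where
  "log_complexity i q = ln ((q + 3)\<^sup>2 * N i (eps i (of_int \<lceil>q\<rceil>)) (of_int \<lceil>q\<rceil>))"

lemma log_complexity_eq:
  assumes "0 \<le> q"
  shows "log_complexity i q = ln ((q + 3)\<^sup>2 * cover_size i (nat \<lceil>q\<rceil>))"
  using assms unfolding log_complexity_def cover_size_def by simp

lemma ln_cover_size_bounds:
  assumes i: "i \<in> {1,2}" and q: "0 \<le> q"
  shows "0 \<le> ln (cover_size i (nat \<lceil>q\<rceil>))" and "ln (cover_size i (nat \<lceil>q\<rceil>)) \<le> log_complexity i q"
proof -
  have N: "1 < cover_size i (nat \<lceil>q\<rceil>)" by (rule cover_size_gt_1[OF i])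
  then show "0 \<le> ln (cover_size i (nat \<lceil>q\<rceil>))" by simp
  have "1 \<le> (q + 3)\<^sup>2" using q by (simp add: one_le_power)
  then have "cover_size i (nat \<lceil>q\<rceil>) \<le> (q + 3)\<^sup>2 * cover_size i (nat \<lceil>q\<rceil>)"
    using N mult_right_mono[of 1 "(q + 3)\<^sup>2" "cover_size i (nat \<lceil>q\<rceil>)"] by simp
  then show "ln (cover_size i (nat \<lceil>q\<rceil>)) \<le> log_complexity i q"
    unfolding log_complexity_eq[OF q] using N by (intro ln_mono) auto
qed

lemma log_complexity_nonneg: "i \<in> {1,2} \<Longrightarrow> 0 \<le> q \<Longrightarrow> 0 \<le> log_complexity i q"
  using ln_cover_size_bounds by (meson order_trans)

lemma confidence_ceiling_le:
  assumes i: "i \<in> {1,2}" and q: "0 \<le> q"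
  shows "confidence i (nat \<lceil>q\<rceil>) \<le> ln 2 + ln (2 * (real m + 1) / \<delta>) + log_complexity i q"
proof -
  define k where "k = nat \<lceil>q\<rceil>"
  define c where "c = 2 * (2 * (real m + 1) / \<delta>)"
  have N: "1 < cover_size i k" by (rule cover_size_gt_1[OF i])
  have c: "0 < c" unfolding c_def using delta by simp
  have "real k = of_int \<lceil>q\<rceil>" using q unfolding k_def by simp
  then have "real k + 2 \<le> q + 3" using of_int_ceiling_le_add_one[of q] by linarith
  then have "(real k + 2)\<^sup>2 * cover_size i k \<le> (q + 3)\<^sup>2 * cover_size i k"
    using N by (intro mult_right_mono power_mono) auto
  then have "c * ((real k + 2)\<^sup>2 * cover_size i k) \<le> c * ((q + 3)\<^sup>2 * cover_size i k)"
    using c by simp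
  moreover have "confidence i k = ln (c * ((real k + 2)\<^sup>2 * cover_size i k))"
    unfolding confidence_def c_def by (simp add: algebra_simps)
  ultimately have "confidence i k \<le> ln (c * ((q + 3)\<^sup>2 * cover_size i k))"
    using c N by (auto intro!: ln_mono)
  also have "\<dots> = ln c + log_complexity i q"
    unfolding log_complexity_eq[OF q] k_def[symmetric] using q N by (intro ln_mult_pos[OF c]) simp
  also have "ln c = ln 2 + ln (2 * (real m + 1) / \<delta>)"
    unfolding c_def using delta by (intro ln_mult_pos) auto
  finally show ?thesis unfolding k_def .
qed

lemma ln_2_le_log_level: "ln 2 \<le> ln (2 * (real m + 1) / \<delta>)"
proof -
  have "2 * (real m + 1) * \<delta> \<le> 2 * (real m + 1)" using delta by (intro mult_left_le) auto
  then have "2 \<le> 2 * (real m + 1) / \<delta>" using delta by (simp add: le_divide_eq)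
  then show ?thesis by simp
qed

lemma deviation_bound_sum_le:
  assumes i: "i1 \<in> {1,2}" "i2 \<in> {1,2}" "i3 \<in> {1,2}" "i4 \<in> {1,2}"
    and q: "0 \<le> q1" "0 \<le> q2" "0 \<le> q3" "0 \<le> q4"
  defines "S \<equiv> 2 * ln (2 * (real m + 1) / \<delta>)
      + (log_complexity i1 q1 + log_complexity i2 q2 + log_complexity i3 q3 + log_complexity i4 q4)"
  shows "deviation_bound i1 q1 + deviation_bound i2 q2 + deviation_bound i3 q3 + deviation_bound i4 q4
      \<le> 10 * B\<^sup>2 * sqrt (real m * S)"
proof -
  let ?c = "\<lambda>i q. confidence i (nat \<lceil>q\<rceil>)" and ?n = "\<lambda>i q. ln (cover_size i (nat \<lceil>q\<rceil>))"
  note bounds = ln_cover_size_bounds[OF i(1) q(1)] ln_cover_size_bounds[OF i(2) q(2)]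
    ln_cover_size_bounds[OF i(3) q(3)] ln_cover_size_bounds[OF i(4) q(4)]
    confidence_ceiling_le[OF i(1) q(1)] confidence_ceiling_le[OF i(2) q(2)]
    confidence_ceiling_le[OF i(3) q(3)] confidence_ceiling_le[OF i(4) q(4)]
  have "ln 2 \<le> ln (2 * (real m + 1) / \<delta>)" by (rule ln_2_le_log_level)
  moreover have "0 \<le> ln (2::real)" by simp
  ultimately have S: "0 \<le> S"
    and c_le: "?c i1 q1 \<le> S" "?c i2 q2 \<le> S" "?c i3 q3 \<le> S" "?c i4 q4 \<le> S"
    and n_le: "?n i1 q1 + ?n i2 q2 + ?n i3 q3 + ?n i4 q4 \<le> S"
    using bounds unfolding S_def by linarith+
  have sqrt_c: "sqrt (2 * real m * c) \<le> 3 / 2 * sqrt (real m * S)" if "c \<le> S" for c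
  proof -
    have "sqrt (2 * real m * c) \<le> sqrt 2 * sqrt (real m * S)"
      using that by (simp add: real_sqrt_mult[symmetric] mult_left_mono)
    also have "sqrt (2::real) \<le> 3 / 2" by (rule real_le_lsqrt) (auto simp: power2_eq_square)
    then have "sqrt 2 * sqrt (real m * S) \<le> 3 / 2 * sqrt (real m * S)" by (rule mult_right_mono) (simp add: S)
    finally show ?thesis .
  qed
  have confidence_part: "sqrt (2 * real m * ?c i1 q1) + sqrt (2 * real m * ?c i2 q2)
      + sqrt (2 * real m * ?c i3 q3) + sqrt (2 * real m * ?c i4 q4) \<le> 6 * sqrt (real m * S)"
    using sqrt_c[OF c_le(1)] sqrt_c[OF c_le(2)] sqrt_c[OF c_le(3)] sqrt_c[OF c_le(4)] by linarith
  have "sqrt (real m * ?n i1 q1) + sqrt (real m * ?n i2 q2) + sqrt (real m * ?n i3 q3) + sqrt (real m * ?n i4 q4)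
      \<le> 2 * sqrt (real m * ?n i1 q1 + real m * ?n i2 q2 + real m * ?n i3 q3 + real m * ?n i4 q4)"
    using bounds by (intro sum_four_sqrt_le) auto
  also have "\<dots> \<le> 2 * sqrt (real m * S)"
    using n_le by (simp add: distrib_left[symmetric] mult_left_mono)
  finally have cover_part: "sqrt (real m * ?n i1 q1) + sqrt (real m * ?n i2 q2) + sqrt (real m * ?n i3 q3)
      + sqrt (real m * ?n i4 q4) \<le> 2 * sqrt (real m * S)" .
  have "deviation_bound i1 q1 + deviation_bound i2 q2 + deviation_bound i3 q3 + deviation_bound i4 q4
      = B\<^sup>2 * (sqrt (2 * real m * ?c i1 q1) + sqrt (2 * real m * ?c i2 q2)
          + sqrt (2 * real m * ?c i3 q3) + sqrt (2 * real m * ?c i4 q4))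
        + 2 * B\<^sup>2 * (sqrt (real m * ?n i1 q1) + sqrt (real m * ?n i2 q2)
          + sqrt (real m * ?n i3 q3) + sqrt (real m * ?n i4 q4))"
    unfolding deviation_bound_def by (simp add: algebra_simps)
  also have "\<dots> \<le> B\<^sup>2 * (6 * sqrt (real m * S)) + 2 * B\<^sup>2 * (2 * sqrt (real m * S))"
    using confidence_part cover_part by (intro add_mono mult_left_mono) auto
  finally show ?thesis by (simp add: algebra_simps)
qed

lemma abs_cross_term_le:
  assumes \<omega>: "\<omega> \<in> good_event" and feas: "feasible m H h1 h2 t0 q1 q2"
  shows "\<bar>cross_term m x (\<lambda>t. Y t \<omega> - \<eta> t) h1 h2 t0\<bar> \<le> deviation_bound 1 q1 + deviation_bound 2 q2"
  using feas unfolding cross_term_segments feasible_def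
  by (intro order_trans[OF abs_triangle_ineq] add_mono uniform_deviation) (use \<omega> in auto)

lemma risk_bound_on_good_event:
  assumes \<omega>: "\<omega> \<in> good_event"
    and hat: "feasible m H h1 h2 t1 q1 q2" and star: "feasible m H g1 g2 t2 p1 p2"
    and pen: "0 \<le> pen 1 q1 t1" "0 \<le> pen 2 q2 t1"
    and obj: "objective m x (\<lambda>t. Y t \<omega>) pen h1 h2 t1 q1 q2 \<le> objective m x (\<lambda>t. Y t \<omega>) pen g1 g2 t2 p1 p2"
  shows "risk m x \<eta> h1 h2 t1 \<le> risk m x \<eta> g1 g2 t2 + (pen 1 p1 t2 + pen 2 p2 t2) / real m
    + 22 * B\<^sup>2 * sqrt ((2 * ln (2 * (real m + 1) / \<delta>)
        + (log_complexity 1 q1 + log_complexity 1 p1 + log_complexity 2 q2 + log_complexity 2 p2)) / real m)"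
proof -
  define S where "S = 2 * ln (2 * (real m + 1) / \<delta>)
      + (log_complexity 1 q1 + log_complexity 1 p1 + log_complexity 2 q2 + log_complexity 2 p2)"
  let ?d = "\<lambda>t. Y t \<omega> - \<eta> t"
  have t: "t1 \<in> {1..m+1}" "t2 \<in> {1..m+1}" and q: "0 \<le> q1" "0 \<le> q2" and p: "0 \<le> p1" "0 \<le> p2"
    using hat star unfolding feasible_def by auto
  have "2 / real m * (cross_term m x ?d h1 h2 t1 - cross_term m x ?d g1 g2 t2)
      \<le> 2 / real m * (deviation_bound 1 q1 + deviation_bound 1 p1 + deviation_bound 2 q2 + deviation_bound 2 p2)"
    using abs_cross_term_le[OF \<omega> hat] abs_cross_term_le[OF \<omega> star] by (intro mult_left_mono) auto
  also have "\<dots> \<le> 2 / real m * (10 * B\<^sup>2 * sqrt (real m * S))"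
    unfolding S_def using q p by (intro mult_left_mono deviation_bound_sum_le) auto
  also have "\<dots> = 20 * B\<^sup>2 * sqrt (S / real m)"
    using m_pos by (simp add: sqrt_mult_eq_mult_sqrt_divide)
  also have "\<dots> \<le> 22 * B\<^sup>2 * sqrt (S / real m)"
  proof -
    have "0 \<le> ln (2::real)" "0 \<le> log_complexity 1 q1" "0 \<le> log_complexity 1 p1"
      "0 \<le> log_complexity 2 q2" "0 \<le> log_complexity 2 p2"
      using q p by (auto intro!: log_complexity_nonneg)
    then have "0 \<le> S" using ln_2_le_log_level unfolding S_def by linarith
    then show ?thesis by (intro mult_right_mono) auto
  qed
  finally have "2 / real m * (cross_term m x ?d h1 h2 t1 - cross_term m x ?d g1 g2 t2) \<le> 22 * B\<^sup>2 * sqrt (S / real m)" .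
  moreover have "risk m x \<eta> h1 h2 t1 \<le> risk m x \<eta> g1 g2 t2 + (pen 1 p1 t2 + pen 2 p2 t2) / real m
      + 2 / real m * (cross_term m x ?d h1 h2 t1 - cross_term m x ?d g1 g2 t2)"
    by (rule risk_le_of_objective_le[OF m_pos t pen obj])
  ultimately show ?thesis unfolding S_def by linarith
qed

end

theorem theoremA1:
  fixes M :: "'w measure"
    and m :: nat and x :: "nat \<Rightarrow> 'x" and B :: real
    and Y :: "nat \<Rightarrow> 'w \<Rightarrow> real" and \<eta> :: "nat \<Rightarrow> real"
    and H :: "nat \<Rightarrow> nat \<Rightarrow> real \<Rightarrow> ('x \<Rightarrow> real) set"
    and pen :: "nat \<Rightarrow> real \<Rightarrow> nat \<Rightarrow> real"
    and N :: "nat \<Rightarrow> real \<Rightarrow> real \<Rightarrow> real"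
    and eps :: "nat \<Rightarrow> real \<Rightarrow> real"
    and hh1 hh2 :: "'w \<Rightarrow> 'x \<Rightarrow> real" and ht :: "'w \<Rightarrow> nat" and hq1 hq2 :: "'w \<Rightarrow> real"
    and hs1 hs2 :: "'x \<Rightarrow> real" and ts :: nat and qs1 qs2 :: real
    and \<delta> :: real
  assumes M: "prob_space M"
    and B: "B \<ge> 1"
    and indep: "prob_space.indep_vars M (\<lambda>_. borel) Y {1..m}"
    and Ybound: "\<And>t \<omega>. t \<in> {1..m} \<Longrightarrow> \<omega> \<in> space M \<Longrightarrow> Y t \<omega> \<in> {-B..B}"
    and eta: "\<And>t. t \<in> {1..m} \<Longrightarrow> \<eta> t = prob_space.expectation M (Y t)"
    and Hrange: "\<And>i t q h z. i \<in> {1,2} \<Longrightarrow> t \<in> {1..m+1} \<Longrightarrow> q \<ge> 0 \<Longrightarrow> h \<in> H i t q \<Longrightarrow> h z \<in> {-B..B}"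
    and Hmono: "\<And>i t q q'. i \<in> {1,2} \<Longrightarrow> t \<in> {1..m+1} \<Longrightarrow> 0 \<le> q \<Longrightarrow> q < q' \<Longrightarrow> H i t q \<subseteq> H i t q'"
    and pen_nonneg: "\<And>i q t. i \<in> {1,2} \<Longrightarrow> t \<in> {1..m+1} \<Longrightarrow> q \<ge> 0 \<Longrightarrow> pen i q t \<ge> 0"
    and cover_finite: "\<And>i t q e. i \<in> {1,2} \<Longrightarrow> t \<in> {1..m+1} \<Longrightarrow> q \<ge> 0 \<Longrightarrow> e > 0 \<Longrightarrow>
        \<exists>C. is_cover m x e (H i t q) C \<and> finite C"
    and N_ge: "\<And>i t q e. i \<in> {1,2} \<Longrightarrow> t \<in> {1..m+1} \<Longrightarrow> q \<ge> 0 \<Longrightarrow> e > 0 \<Longrightarrow>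
        real (min_cover_card m x e (H i t q)) \<le> N i e q"
    and eps_pos: "\<And>i q. i \<in> {1,2} \<Longrightarrow> q \<ge> 0 \<Longrightarrow> 0 < eps i q \<and> eps i q \<le> B"
    and eps_le: "\<And>i q. i \<in> {1,2} \<Longrightarrow> q \<ge> 0 \<Longrightarrow> eps i q \<le> B * sqrt (ln (N i (eps i q) q) / real m)"
    and hat_feas: "\<And>\<omega>. \<omega> \<in> space M \<Longrightarrow> feasible m H (hh1 \<omega>) (hh2 \<omega>) (ht \<omega>) (hq1 \<omega>) (hq2 \<omega>)"
    and hat_min: "\<And>\<omega> h1 h2 t0 q1 q2. \<omega> \<in> space M \<Longrightarrow> feasible m H h1 h2 t0 q1 q2 \<Longrightarrow>
        objective m x (\<lambda>t. Y t \<omega>) pen (hh1 \<omega>) (hh2 \<omega>) (ht \<omega>) (hq1 \<omega>) (hq2 \<omega>)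
          \<le> objective m x (\<lambda>t. Y t \<omega>) pen h1 h2 t0 q1 q2"
    and star_feas: "feasible m H hs1 hs2 ts qs1 qs2"
    and star_min: "\<And>h1 h2 t0 q1 q2. feasible m H h1 h2 t0 q1 q2 \<Longrightarrow>
        objective m x \<eta> pen hs1 hs2 ts qs1 qs2 \<le> objective m x \<eta> pen h1 h2 t0 q1 q2"
    and delta: "0 < \<delta>" "\<delta> < 1"
  shows "\<exists>A \<in> sets M. prob_space.prob M A \<ge> 1 - \<delta> \<and>
    (\<forall>\<omega>\<in>A.
      risk m x \<eta> (hh1 \<omega>) (hh2 \<omega>) (ht \<omega>)
        \<le> risk m x \<eta> hs1 hs2 ts + (pen 1 qs1 ts + pen 2 qs2 ts) / real m
          + 22 * B^2 * sqrt ((2 * ln (2 * (real m + 1) / \<delta>)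
              + (let L = (\<lambda>i q. ln ((q + 3)^2 * N i (eps i (real_of_int \<lceil>q\<rceil>)) (real_of_int \<lceil>q\<rceil>)))
                 in L 1 (hq1 \<omega>) + L 1 qs1 + L 2 (hq2 \<omega>) + L 2 qs2)) / real m))"
proof (cases "m = 0")
  case True
  \<comment> \<open>Division by \<open>real m = 0\<close> makes both risks and the right-hand side vanish.\<close>
  interpret P: prob_space M by (rule M)
  show ?thesis
    using True delta by (intro bexI[of _ "space M"]) (auto simp: risk_def P.prob_space)
next
  case False
  interpret piecewise_regression M m x B Y \<eta> H N eps \<delta>
  proof (intro piecewise_regression.intro[OF M] piecewise_regression_axioms.intro)
    show "\<And>i q. i \<in> {1,2} \<Longrightarrow> 0 \<le> q \<Longrightarrow> 0 < eps i q" using eps_pos by blast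
  qed (fact | use False in simp)+
  have "risk m x \<eta> (hh1 \<omega>) (hh2 \<omega>) (ht \<omega>)
      \<le> risk m x \<eta> hs1 hs2 ts + (pen 1 qs1 ts + pen 2 qs2 ts) / real m
        + 22 * B\<^sup>2 * sqrt ((2 * ln (2 * (real m + 1) / \<delta>)
            + (log_complexity 1 (hq1 \<omega>) + log_complexity 1 qs1 + log_complexity 2 (hq2 \<omega>) + log_complexity 2 qs2)) / real m)"
    if \<omega>: "\<omega> \<in> good_event" for \<omega>
  proof -
    have \<omega>_space: "\<omega> \<in> space M" using \<omega> unfolding good_event_def by blast
    have hat: "feasible m H (hh1 \<omega>) (hh2 \<omega>) (ht \<omega>) (hq1 \<omega>) (hq2 \<omega>)" by (rule hat_feas[OF \<omega>_space])
    then have "0 \<le> pen 1 (hq1 \<omega>) (ht \<omega>)" "0 \<le> pen 2 (hq2 \<omega>) (ht \<omega>)"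
      unfolding feasible_def by (auto intro!: pen_nonneg)
    then show ?thesis
      by (rule risk_bound_on_good_event[OF \<omega> hat star_feas _ _ hat_min[OF \<omega>_space star_feas]])
  qed
  then show ?thesis
    using good_event_measurable prob_good_event unfolding Let_def log_complexity_def by blast
qed

end
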